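(* Let $S$ be a specialisation independent scheduling rule, $V$ a finite set of variables, $G$ and $X$ p-goals, $\gamma$ a substitution and $\underline\tau$ a shifting such that $X+G\gamma\underline{\tau}$ is defined. If there is a p-SLD derivation $X+G\gamma\underline{\tau}\xrightarrow{S,D}\cdot$ via $S$, then there is a p-SLD derivation $Dr=(G\xrightarrow{S,\,D/(G\gamma\underline{\tau})}\cdot)$ via $S$ with $nvar(Dr)\cap V=\emptyset$.
   Context: A p-atom is a pair $a[p]$ of an atom $a$ and a rational priority $p$. A p-goal is a finite set of p-atoms with pairwise distinct priorities, regarded as a list ordered by increasing priority. Substitutions act on atoms and leave priorities unchanged. A clause is $h\leftarrow B$ with $h$ an atom and $B$ a p-goal. For p-goals with no common priority, $F+G=F\cup G$; $F|G$ denotes $F+G$ when all priorities of $F$ are smaller than those of $G$. A shifting $\underline{\pi}$ is a strictly increasing bijection $\mathbb{Q}\to\mathbb{Q}$ acting on priorities ($G\underline\pi$). Priority derivation step: for a p-goal $a|F$ ($a$ of least priority), clause $c=(h\leftarrow B)$, renaming $\xi$ with $var(a|F)\cap var(c\xi)=\emptyset$, idempotent relevant mgu $\theta$ of $a$ and $h\xi$, and shifting $\underline{\pi}$ with $F$, $B\xi\underline{\pi}$ sharing no priority: $a|F\xrightarrow{c\xi,\theta}(F+B\xi\underline{\pi})\theta$. A p-SLD derivation is a sequence of such steps with each renamed clause $c_j\xi_j$ variable-disjoint from the initial goal and all earlier renamed clauses; its template is the sequence of applied clauses and $nvar$ of a derivation is the union of the sets $var(c_j\xi_j)$. Lowering: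 for $c=(h\leftarrow B)$, a step $a\lambda\underline{\sigma}|(K\lambda\underline{\sigma}+X)\xrightarrow{c}(X+K\lambda\underline{\sigma}+B\xi''\underline{\theta}'')\alpha''$ is a lowering by $X$ of a step $a|K\xrightarrow{c}(K+B\xi'\underline{\theta}')\alpha'$; it is a congruent lowering by $X$ if some shifting $\underline{\rho}$ has $K\underline{\rho}=K\underline{\sigma}$ and $B\underline{\theta}'\underline{\rho}=B\underline{\theta}''$. Steps are congruent lowerings of each other if each is a congruent lowering of the other. A set $S$ of steps is complete if (i) whenever some step $G\xrightarrow{c}\cdot$ exists, some step $G\xrightarrow{c}\cdot$ lies in $S$, and (ii) $S$ contains every step that is a congruent lowering of each other with a step of $S$. $S$ is specialisation independent if whenever $Ds_1,Ds_2\in S$ and $Ds_2$ is a lowering of $Ds_1$ by $X$, $Ds_2$ is a congruent lowering of $Ds_1$ by $X$. A specialisation independent scheduling rule is a complete specialisation independent set of steps. $G\xrightarrow{S,M}R$ denotes a p-SLD derivation with template $M$ all of whose steps lie in $S$. Sub-templates: for a step $a|(F+G)\xrightarrow{c}Q=((F+G)+B\xi\underline{\pi})\alpha$, $Q/F=F\alpha$, $Q/a=B\xi\underline\pi\alpha$, $c/a=c$, $c/F=$ empty, $c/(a|F)=c$; for $F+G\xrightarrow{c}Q\xrightarrow{K}R$, recursively $(c|K)/F=(c/F)|(K/(Q/F))$. Thus $D/F$ is the subsequence of the template $D$ of clauses applied to p-atoms of $F$ or descending from $F$. *)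

theory Defs
  imports Complex_Main
begin

datatype ('f, 'v) fterm = Var 'v | Fun 'f "('f, 'v) fterm list"

datatype ('p, 'f, 'v) patom = Atom 'p "('f, 'v) fterm list"

type_synonym ('f, 'v) subst = "'v \<Rightarrow> ('f, 'v) fterm"

fun vars_term :: "('f, 'v) fterm \<Rightarrow> 'v set" where
  "vars_term (Var x) = {x}"
| "vars_term (Fun f ts) = (\<Union>t\<in>set ts. vars_term t)"

fun subst_term :: "('f, 'v) fterm \<Rightarrow> ('f, 'v) subst \<Rightarrow> ('f, 'v) fterm" where
  "subst_term (Var x) \<sigma> = \<sigma> x"
| "subst_term (Fun f ts) \<sigma> = Fun f (map (\<lambda>t. subst_term t \<sigma>) ts)"

fun vars_atom :: "('p, 'f, 'v) patom \<Rightarrow> 'v set" where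
  "vars_atom (Atom p ts) = (\<Union>t\<in>set ts. vars_term t)"

fun subst_atom :: "('p, 'f, 'v) patom \<Rightarrow> ('f, 'v) subst \<Rightarrow> ('p, 'f, 'v) patom" where
  "subst_atom (Atom p ts) \<sigma> = Atom p (map (\<lambda>t. subst_term t \<sigma>) ts)"

text \<open>Composition: first apply \<open>\<theta>\<close>, then \<open>\<delta>\<close>.\<close>
definition subst_comp :: "('f, 'v) subst \<Rightarrow> ('f, 'v) subst \<Rightarrow> ('f, 'v) subst" where
  "subst_comp \<theta> \<delta> = (\<lambda>x. subst_term (\<theta> x) \<delta>)"

definition subst_dom :: "('f, 'v) subst \<Rightarrow> 'v set" where
  "subst_dom \<theta> = {x. \<theta> x \<noteq> Var x}"

definition subst_vars :: "('f, 'v) subst \<Rightarrow> 'v set" where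
  "subst_vars \<theta> = subst_dom \<theta> \<union> (\<Union>x\<in>subst_dom \<theta>. vars_term (\<theta> x))"

definition is_renaming :: "('f, 'v) subst \<Rightarrow> bool" where
  "is_renaming \<xi> \<longleftrightarrow> (\<exists>f. bij f \<and> \<xi> = (\<lambda>x. Var (f x)))"

definition is_unifier :: "('f, 'v) subst \<Rightarrow> ('p, 'f, 'v) patom \<Rightarrow> ('p, 'f, 'v) patom \<Rightarrow> bool" where
  "is_unifier \<theta> a b \<longleftrightarrow> subst_atom a \<theta> = subst_atom b \<theta>"

definition is_mgu :: "('f, 'v) subst \<Rightarrow> ('p, 'f, 'v) patom \<Rightarrow> ('p, 'f, 'v) patom \<Rightarrow> bool" where
  "is_mgu \<theta> a b \<longleftrightarrow> is_unifier \<theta> a b \<and>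
     (\<forall>\<sigma>. is_unifier \<sigma> a b \<longrightarrow> (\<exists>\<delta>. \<sigma> = subst_comp \<theta> \<delta>))"

definition is_irmgu :: "('f, 'v) subst \<Rightarrow> ('p, 'f, 'v) patom \<Rightarrow> ('p, 'f, 'v) patom \<Rightarrow> bool" where
  "is_irmgu \<theta> a b \<longleftrightarrow> is_mgu \<theta> a b \<and> subst_comp \<theta> \<theta> = \<theta> \<and>
     subst_vars \<theta> \<subseteq> vars_atom a \<union> vars_atom b"

text \<open>A p-goal is a finite set of p-atoms with pairwise distinct priorities; it is
  represented as a finite partial map from priorities to atoms.\<close>
type_synonym ('p, 'f, 'v) pgoal = "rat \<rightharpoonup> ('p, 'f, 'v) patom"

definition is_pgoal :: "('p, 'f, 'v) pgoal \<Rightarrow> bool" where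
  "is_pgoal G \<longleftrightarrow> finite (dom G)"

definition vars_goal :: "('p, 'f, 'v) pgoal \<Rightarrow> 'v set" where
  "vars_goal G = (\<Union>a\<in>ran G. vars_atom a)"

definition subst_goal :: "('p, 'f, 'v) pgoal \<Rightarrow> ('f, 'v) subst \<Rightarrow> ('p, 'f, 'v) pgoal" where
  "subst_goal G \<theta> = (\<lambda>q. map_option (\<lambda>a. subst_atom a \<theta>) (G q))"

definition is_shifting :: "(rat \<Rightarrow> rat) \<Rightarrow> bool" where
  "is_shifting \<pi> \<longleftrightarrow> strict_mono \<pi> \<and> bij \<pi>"

text \<open>\<open>G\<pi>\<close>: the p-atom \<open>a[p]\<close> becomes \<open>a[\<pi> p]\<close>.\<close>
definition shift_goal :: "('p, 'f, 'v) pgoal \<Rightarrow> (rat \<Rightarrow> rat) \<Rightarrow> ('p, 'f, 'v) pgoal" where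
  "shift_goal G \<pi> = (\<lambda>q. G (inv \<pi> q))"

text \<open>\<open>F + G\<close> (only used when the priorities are disjoint).\<close>
definition goal_plus :: "('p, 'f, 'v) pgoal \<Rightarrow> ('p, 'f, 'v) pgoal \<Rightarrow> ('p, 'f, 'v) pgoal" where
  "goal_plus F G = F ++ G"

definition plus_defined :: "('p, 'f, 'v) pgoal \<Rightarrow> ('p, 'f, 'v) pgoal \<Rightarrow> bool" where
  "plus_defined F G \<longleftrightarrow> dom F \<inter> dom G = {}"

type_synonym ('p, 'f, 'v) clause = "('p, 'f, 'v) patom \<times> ('p, 'f, 'v) pgoal"

definition vars_clause :: "('p, 'f, 'v) clause \<Rightarrow> 'v set" where
  "vars_clause c = vars_atom (fst c) \<union> vars_goal (snd c)"

definition subst_clause :: "('p, 'f, 'v) clause \<Rightarrow> ('f, 'v) subst \<Rightarrow> ('p, 'f, 'v) clause" where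
  "subst_clause c \<xi> = (subst_atom (fst c) \<xi>, subst_goal (snd c) \<xi>)"

text \<open>A step \<open>a|F \<rightarrow>(c\<xi>,\<theta>) (F + B\<xi>\<pi>)\<theta>\<close> is recorded by its goal, the clause \<open>c\<close>,
  the renaming \<open>\<xi>\<close>, the mgu \<open>\<theta>\<close> and the shifting \<open>\<pi>\<close>.\<close>
record ('p, 'f, 'v) pstep =
  sgoal :: "('p, 'f, 'v) pgoal"
  sclause :: "('p, 'f, 'v) clause"
  sren :: "('f, 'v) subst"
  smgu :: "('f, 'v) subst"
  sshift :: "rat \<Rightarrow> rat"

definition sel_prio :: "('p, 'f, 'v) pgoal \<Rightarrow> rat" where
  "sel_prio G = Min (dom G)"

definition sel_atom :: "('p, 'f, 'v) pgoal \<Rightarrow> ('p, 'f, 'v) patom" where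
  "sel_atom G = the (G (sel_prio G))"

definition goal_rest :: "('p, 'f, 'v) pgoal \<Rightarrow> ('p, 'f, 'v) pgoal" where
  "goal_rest G = G(sel_prio G := None)"

definition rclause :: "('p, 'f, 'v, 'x) pstep_scheme \<Rightarrow> ('p, 'f, 'v) clause" where
  "rclause s = subst_clause (sclause s) (sren s)"

definition is_step :: "('p, 'f, 'v) pstep \<Rightarrow> bool" where
  "is_step s \<longleftrightarrow>
     is_pgoal (sgoal s) \<and> dom (sgoal s) \<noteq> {} \<and> is_pgoal (snd (sclause s)) \<and>
     is_renaming (sren s) \<and>
     vars_goal (sgoal s) \<inter> vars_clause (rclause s) = {} \<and>
     is_irmgu (smgu s) (sel_atom (sgoal s)) (fst (rclause s)) \<and>
     is_shifting (sshift s) \<and>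
     plus_defined (goal_rest (sgoal s)) (shift_goal (snd (rclause s)) (sshift s))"

definition sresult :: "('p, 'f, 'v) pstep \<Rightarrow> ('p, 'f, 'v) pgoal" where
  "sresult s = subst_goal
     (goal_plus (goal_rest (sgoal s)) (shift_goal (snd (rclause s)) (sshift s))) (smgu s)"

definition is_deriv :: "('p, 'f, 'v) pgoal \<Rightarrow> ('p, 'f, 'v) pstep list \<Rightarrow> bool" where
  "is_deriv G0 ds \<longleftrightarrow> is_pgoal G0 \<and>
     (\<forall>i<length ds. is_step (ds ! i)) \<and>
     (ds \<noteq> [] \<longrightarrow> sgoal (ds ! 0) = G0) \<and>
     (\<forall>i. Suc i < length ds \<longrightarrow> sgoal (ds ! Suc i) = sresult (ds ! i)) \<and>
     (\<forall>j<length ds. vars_clause (rclause (ds ! j)) \<inter> vars_goal G0 = {} \<and>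
        (\<forall>i<j. vars_clause (rclause (ds ! j)) \<inter> vars_clause (rclause (ds ! i)) = {}))"

definition template :: "('p, 'f, 'v) pstep list \<Rightarrow> ('p, 'f, 'v) clause list" where
  "template ds = map sclause ds"

definition nvar :: "('p, 'f, 'v) pstep list \<Rightarrow> 'v set" where
  "nvar ds = (\<Union>s\<in>set ds. vars_clause (rclause s))"

text \<open>\<open>G \<rightarrow>(S,M) \<cdot>\<close>: a derivation with template \<open>M\<close> all of whose steps lie in \<open>S\<close>.\<close>
definition deriv_via :: "('p, 'f, 'v) pstep set \<Rightarrow> ('p, 'f, 'v) pgoal \<Rightarrow>
    ('p, 'f, 'v) clause list \<Rightarrow> ('p, 'f, 'v) pstep list \<Rightarrow> bool" where
  "deriv_via S G M ds \<longleftrightarrow> is_deriv G ds \<and> set ds \<subseteq> S \<and> template ds = M"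

text \<open>Since priorities within a goal are pairwise distinct,
  a sub-p-goal \<open>F\<close> of the current goal (and its descendants) is tracked by its set
  of priorities \<open>P\<close>: if the selected p-atom belongs to \<open>F\<close>, the clause is recorded and
  the descendants are \<open>F\<close> without the selected atom plus the shifted body \<open>B\<xi>\<pi>\<close>;
  otherwise nothing is recorded and the descendants are \<open>F\<alpha>\<close>.\<close>
fun subtempl :: "('p, 'f, 'v) pstep list \<Rightarrow> rat set \<Rightarrow> ('p, 'f, 'v) clause list" where
  "subtempl [] P = []"
| "subtempl (s # ds) P =
     (if sel_prio (sgoal s) \<in> P
      then sclause s # subtempl ds ((P - {sel_prio (sgoal s)}) \<union> sshift s ` dom (snd (sclause s)))
      else subtempl ds P)"

text \<open>\<open>s2\<close> is a lowering by \<open>X\<close> of \<open>s1\<close>, witnessed by the substitution \<open>lam\<close> and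
  shifting \<open>\<sigma>\<close>: \<open>s1 = (a|K \<rightarrow>c \<dots>)\<close>, \<open>s2 = (a\<lambda>\<sigma> | (K\<lambda>\<sigma> + X) \<rightarrow>c \<dots>)\<close>.\<close>
definition lowering_wit :: "('p, 'f, 'v) pstep \<Rightarrow> ('p, 'f, 'v) pstep \<Rightarrow> ('p, 'f, 'v) pgoal \<Rightarrow>
    ('f, 'v) subst \<Rightarrow> (rat \<Rightarrow> rat) \<Rightarrow> bool" where
  "lowering_wit s1 s2 X lam \<sigma> \<longleftrightarrow>
     is_step s1 \<and> is_step s2 \<and> sclause s2 = sclause s1 \<and> is_shifting \<sigma> \<and>
     plus_defined (shift_goal (subst_goal (sgoal s1) lam) \<sigma>) X \<and>
     sgoal s2 = goal_plus (shift_goal (subst_goal (sgoal s1) lam) \<sigma>) X \<and>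
     sel_prio (sgoal s2) = \<sigma> (sel_prio (sgoal s1))"

definition is_lowering :: "('p, 'f, 'v) pstep \<Rightarrow> ('p, 'f, 'v) pstep \<Rightarrow> ('p, 'f, 'v) pgoal \<Rightarrow> bool" where
  "is_lowering s1 s2 X \<longleftrightarrow> (\<exists>lam \<sigma>. lowering_wit s1 s2 X lam \<sigma>)"

definition is_cong_lowering :: "('p, 'f, 'v) pstep \<Rightarrow> ('p, 'f, 'v) pstep \<Rightarrow> ('p, 'f, 'v) pgoal \<Rightarrow> bool" where
  "is_cong_lowering s1 s2 X \<longleftrightarrow> (\<exists>lam \<sigma>. lowering_wit s1 s2 X lam \<sigma> \<and>
     (\<exists>\<rho>. is_shifting \<rho> \<and>
        shift_goal (goal_rest (sgoal s1)) \<rho> = shift_goal (goal_rest (sgoal s1)) \<sigma> \<and>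
        shift_goal (shift_goal (snd (sclause s1)) (sshift s1)) \<rho>
          = shift_goal (snd (sclause s1)) (sshift s2)))"

definition mutual_cong_lowering :: "('p, 'f, 'v) pstep \<Rightarrow> ('p, 'f, 'v) pstep \<Rightarrow> bool" where
  "mutual_cong_lowering s1 s2 \<longleftrightarrow> (\<exists>X. is_cong_lowering s1 s2 X) \<and> (\<exists>X. is_cong_lowering s2 s1 X)"

definition complete_steps :: "('p, 'f, 'v) pstep set \<Rightarrow> bool" where
  "complete_steps S \<longleftrightarrow> (\<forall>s\<in>S. is_step s) \<and>
     (\<forall>G c. (\<exists>s. is_step s \<and> sgoal s = G \<and> sclause s = c) \<longrightarrow>
            (\<exists>s\<in>S. sgoal s = G \<and> sclause s = c)) \<and>
     (\<forall>s\<in>S. \<forall>s'. is_step s' \<and> mutual_cong_lowering s s' \<longrightarrow> s' \<in> S)"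

definition spec_independent :: "('p, 'f, 'v) pstep set \<Rightarrow> bool" where
  "spec_independent S \<longleftrightarrow> (\<forall>s1\<in>S. \<forall>s2\<in>S. \<forall>X. is_lowering s1 s2 X \<longrightarrow> is_cong_lowering s1 s2 X)"

definition si_scheduling_rule :: "('p, 'f, 'v) pstep set \<Rightarrow> bool" where
  "si_scheduling_rule S \<longleftrightarrow> complete_steps S \<and> spec_independent S"

end

theory Submission
  imports Defs
begin

text \<open>The derivation of \<open>X + G\<gamma>\<tau>\<close> is simulated step by step by a derivation of \<open>G\<close>.
  Throughout, the current goal has the form \<open>(G'\<lambda>)\<sigma> + X'\<close>, where \<open>G'\<close> is the current goal of the
  simulating derivation and \<open>(G'\<lambda>)\<sigma>\<close> consists exactly of the descendants of \<open>G\<gamma>\<tau>\<close>.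
  A step selecting an atom of \<open>X'\<close> only composes \<open>\<lambda>\<close> with its mgu. A step selecting an atom of
  \<open>(G'\<lambda>)\<sigma>\<close> is a lowering by \<open>X'\<close> of a step on \<open>G'\<close> with the same clause: combined with \<open>\<lambda>\<close>,
  its mgu unifies the selected atom of \<open>G'\<close> with the head of a fresh variant of the clause, so
  (by the existence of idempotent relevant mgus) some step on \<open>G'\<close> with this clause exists,
  and completeness of \<open>S\<close> provides one in \<open>S\<close> whose clause is renamed apart from all variables
  used so far. Specialisation independence makes the lowering congruent, so the new goal again
  has the required form, with \<open>G'\<close> replaced by the result of the simulating step.\<close>

lemma subst_term_comp: "subst_term (subst_term t \<sigma>) \<tau> = subst_term t (subst_comp \<sigma> \<tau>)"
  by (induction t) (auto simp: subst_comp_def)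

lemma subst_comp_assoc: "subst_comp (subst_comp \<sigma> \<tau>) \<rho> = subst_comp \<sigma> (subst_comp \<tau> \<rho>)"
  by (auto simp: subst_comp_def subst_term_comp)

lemma subst_term_Var [simp]: "subst_term t Var = t"
  by (induction t) (auto simp: map_idI)

lemma subst_term_cong: "(\<And>x. x \<in> vars_term t \<Longrightarrow> \<sigma> x = \<tau> x) \<Longrightarrow> subst_term t \<sigma> = subst_term t \<tau>"
  by (induction t) auto

lemma vars_subst_term: "vars_term (subst_term t \<sigma>) = (\<Union>x\<in>vars_term t. vars_term (\<sigma> x))"
  by (induction t) auto

lemma finite_vars_term [simp]: "finite (vars_term t)"
  by (induction t) auto

lemma vars_subst_term_subset: "vars_term (subst_term t \<theta>) \<subseteq> vars_term t \<union> subst_vars \<theta>"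
  by (force simp: vars_subst_term subst_vars_def subst_dom_def)

lemma subst_vars_comp: "subst_vars (subst_comp \<sigma> \<theta>) \<subseteq> subst_vars \<sigma> \<union> subst_vars \<theta>"
proof
  fix z assume "z \<in> subst_vars (subst_comp \<sigma> \<theta>)"
  then obtain y where y: "subst_comp \<sigma> \<theta> y \<noteq> Var y"
    and z: "z = y \<or> z \<in> vars_term (subst_term (\<sigma> y) \<theta>)"
    by (auto simp: subst_vars_def subst_dom_def subst_comp_def)
  show "z \<in> subst_vars \<sigma> \<union> subst_vars \<theta>"
  proof (cases "\<sigma> y = Var y")
    case True
    then show ?thesis using y z by (auto simp: subst_vars_def subst_dom_def subst_comp_def)
  next
    case False
    then show ?thesis
      using z vars_subst_term_subset[of "\<sigma> y" \<theta>] by (auto simp: subst_vars_def subst_dom_def)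
  qed
qed

lemma size_subst_term_occurs:
  "x \<in> vars_term t \<Longrightarrow> t \<noteq> Var x \<Longrightarrow> size (\<sigma> x) < size (subst_term t \<sigma>)"
proof (induction t)
  case (Var y)
  then show ?case by simp
next
  case (Fun f ts)
  then obtain t where t: "t \<in> set ts" "x \<in> vars_term t" by auto
  have "size (\<sigma> x) \<le> size (subst_term t \<sigma>)"
    using Fun.IH t by (cases "t = Var x") fastforce+
  also have "\<dots> \<le> size_list (size \<circ> (\<lambda>t. subst_term t \<sigma>)) ts"
    using t by (intro size_list_estimation') auto
  also have "\<dots> < size (subst_term (Fun f ts) \<sigma>)"
    by simp
  finally show ?case .
qed

lemma subst_rename_apart:
  assumes "inj f" and "V \<inter> f ` C = {}"
  obtains \<mu> where "\<And>x. x \<in> V \<Longrightarrow> \<mu> x = \<sigma> x" and "\<And>x. x \<in> C \<Longrightarrow> \<mu> (f x) = \<tau> x"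
proof
  define \<mu> where "\<mu> y = (if y \<in> f ` C then \<tau> (inv f y) else \<sigma> y)" for y
  show "\<mu> x = \<sigma> x" if "x \<in> V" for x using that assms(2) by (auto simp: \<mu>_def)
  show "\<mu> (f x) = \<tau> x" if "x \<in> C" for x using that assms(1) by (simp add: \<mu>_def)
qed

lemma fresh_renaming:
  fixes C W :: "'v set"
  assumes "infinite (UNIV :: 'v set)" and "finite C" and "finite W"
  obtains f where "bij f" and "f ` C \<inter> W = {}"
proof -
  have "infinite (UNIV - (W \<union> C))" using assms by auto
  then obtain C' where C': "finite C'" "card C' = card C" "C' \<subseteq> UNIV - (W \<union> C)"
    using infinite_arbitrarily_large by blast
  then obtain g where g: "bij_betw g C C'" using finite_same_card_bij assms(2) by metis
  \<comment> \<open>an involution exchanging \<open>C\<close> and \<open>C'\<close>\<close>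
  define f where "f x = (if x \<in> C then g x else if x \<in> C' then inv_into C g x else x)" for x
  have "f (f x) = x" for x
  proof -
    consider "x \<in> C" | "x \<in> C'" | "x \<notin> C" "x \<notin> C'" by blast
    then show ?thesis
    proof cases
      case 1
      then have "g x \<in> C'" "g x \<notin> C" using g C' by (auto simp: bij_betw_def)
      then show ?thesis using 1 g by (simp add: f_def bij_betw_def)
    next
      case 2
      then have "inv_into C g x \<in> C" "g (inv_into C g x) = x"
        using g by (auto simp: bij_betw_def inv_into_into f_inv_into_f)
      then show ?thesis using 2 C' by (auto simp: f_def)
    next
      case 3
      then show ?thesis by (simp add: f_def)
    qed
  qed
  then have "bij f" by (intro o_bij[of f f]) (auto simp: fun_eq_iff)
  moreover have "f ` C \<inter> W = {}" using g C' by (auto simp: f_def bij_betw_def)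
  ultimately show thesis by (rule that)
qed

section \<open>Unification\<close>

type_synonym ('f, 'v) eqs = "(('f, 'v) fterm \<times> ('f, 'v) fterm) list"

definition unifies :: "('f, 'v) subst \<Rightarrow> ('f, 'v) eqs \<Rightarrow> bool" where
  "unifies \<sigma> E \<longleftrightarrow> (\<forall>(s, t)\<in>set E. subst_term s \<sigma> = subst_term t \<sigma>)"

definition vars_eqs :: "('f, 'v) eqs \<Rightarrow> 'v set" where
  "vars_eqs E = (\<Union>(s, t)\<in>set E. vars_term s \<union> vars_term t)"

definition size_eqs :: "('f, 'v) eqs \<Rightarrow> nat" where
  "size_eqs E = (\<Sum>(s, t)\<leftarrow>E. size s + size t + 1)"

definition subst_eqs :: "('f, 'v) eqs \<Rightarrow> ('f, 'v) subst \<Rightarrow> ('f, 'v) eqs" where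
  "subst_eqs E \<sigma> = map (\<lambda>(s, t). (subst_term s \<sigma>, subst_term t \<sigma>)) E"

definition idem_subst :: "('f, 'v) subst \<Rightarrow> bool" where
  "idem_subst \<theta> \<longleftrightarrow> (\<forall>y. \<forall>z\<in>vars_term (\<theta> y). \<theta> z = Var z)"

definition is_irmgu_eqs :: "('f, 'v) subst \<Rightarrow> ('f, 'v) eqs \<Rightarrow> bool" where
  "is_irmgu_eqs \<theta> E \<longleftrightarrow> unifies \<theta> E \<and> (\<forall>u. unifies u E \<longrightarrow> (\<exists>\<delta>. u = subst_comp \<theta> \<delta>)) \<and>
     idem_subst \<theta> \<and> subst_vars \<theta> \<subseteq> vars_eqs E"

lemma unifies_simps [simp]:
  "unifies \<sigma> []"
  "unifies \<sigma> ((s, t) # E) \<longleftrightarrow> subst_term s \<sigma> = subst_term t \<sigma> \<and> unifies \<sigma> E"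
  "unifies \<sigma> (E @ E') \<longleftrightarrow> unifies \<sigma> E \<and> unifies \<sigma> E'"
  by (auto simp: unifies_def)

lemma vars_eqs_simps [simp]:
  "vars_eqs [] = {}"
  "vars_eqs ((s, t) # E) = vars_term s \<union> vars_term t \<union> vars_eqs E"
  "vars_eqs (E @ E') = vars_eqs E \<union> vars_eqs E'"
  by (auto simp: vars_eqs_def)

lemma size_eqs_simps [simp]:
  "size_eqs [] = 0"
  "size_eqs ((s, t) # E) = size s + size t + 1 + size_eqs E"
  "size_eqs (E @ E') = size_eqs E + size_eqs E'"
  by (auto simp: size_eqs_def)

lemma finite_vars_eqs: "finite (vars_eqs E)"
  by (auto simp: vars_eqs_def)

lemma unifies_subst_eqs: "unifies u (subst_eqs E \<sigma>) \<longleftrightarrow> unifies (subst_comp \<sigma> u) E"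
  by (auto simp: unifies_def subst_eqs_def subst_term_comp)

lemma vars_subst_eqs: "vars_eqs (subst_eqs E \<sigma>) = (\<Union>x\<in>vars_eqs E. vars_term (\<sigma> x))"
  by (force simp: vars_eqs_def subst_eqs_def vars_subst_term)

lemma idem_subst_comp_self: "idem_subst \<theta> \<Longrightarrow> subst_comp \<theta> \<theta> = \<theta>"
proof
  fix y assume "idem_subst \<theta>"
  then have "subst_term (\<theta> y) \<theta> = subst_term (\<theta> y) Var"
    by (intro subst_term_cong) (auto simp: idem_subst_def)
  then show "subst_comp \<theta> \<theta> y = \<theta> y" by (simp add: subst_comp_def)
qed

lemma unifies_zip:
  "length ts = length ss \<Longrightarrow>
     unifies \<sigma> (zip ts ss) \<longleftrightarrow> map (\<lambda>t. subst_term t \<sigma>) ts = map (\<lambda>t. subst_term t \<sigma>) ss"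
  by (induction ts ss rule: list_induct2) auto

lemma vars_eqs_zip:
  "length ts = length ss \<Longrightarrow>
     vars_eqs (zip ts ss) = (\<Union>t\<in>set ts. vars_term t) \<union> (\<Union>s\<in>set ss. vars_term s)"
  by (induction ts ss rule: list_induct2) auto

lemma size_eqs_zip:
  "length ts = length ss \<Longrightarrow> size_eqs (zip ts ss) \<le> size_list size ts + size_list size ss"
  by (induction ts ss rule: list_induct2) auto

lemma is_irmgu_eqs_Nil: "is_irmgu_eqs Var []"
  by (auto simp: is_irmgu_eqs_def idem_subst_def subst_vars_def subst_dom_def subst_comp_def)

lemma is_irmgu_eqs_swap: "is_irmgu_eqs \<theta> ((s, t) # E) \<longleftrightarrow> is_irmgu_eqs \<theta> ((t, s) # E)"
  by (auto simp: is_irmgu_eqs_def)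

lemma is_irmgu_eqs_trivial: "is_irmgu_eqs \<theta> E \<Longrightarrow> is_irmgu_eqs \<theta> ((t, t) # E)"
  by (auto simp: is_irmgu_eqs_def)

lemma is_irmgu_eqs_decompose:
  assumes "length ts = length ss" and "is_irmgu_eqs \<theta> (zip ts ss @ E)"
  shows "is_irmgu_eqs \<theta> ((Fun f ts, Fun f ss) # E)"
  using assms by (simp add: is_irmgu_eqs_def unifies_zip vars_eqs_zip Un_assoc)

lemma subst_comp_elim:
  assumes "x \<notin> vars_term t" and "u x = subst_term t u"
  shows "subst_comp (Var(x := t)) u = u"
  using assms by (auto simp: subst_comp_def)

lemma idem_subst_comp_elim:
  assumes x: "x \<notin> vars_term t" "x \<notin> subst_vars \<theta>" and idem: "idem_subst \<theta>"
  shows "idem_subst (subst_comp (Var(x := t)) \<theta>)"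
  unfolding idem_subst_def
proof (intro allI ballI)
  fix y z assume "z \<in> vars_term (subst_comp (Var(x := t)) \<theta> y)"
  then obtain w where w: "w \<in> vars_term ((Var(x := t)) y)" "z \<in> vars_term (\<theta> w)"
    by (auto simp: subst_comp_def vars_subst_term)
  have "z \<noteq> x"
  proof (cases "\<theta> w = Var w")
    case True
    then show ?thesis using w x(1) by (auto split: if_splits)
  next
    case False
    then have "z \<in> subst_vars \<theta>" using w(2) by (auto simp: subst_vars_def subst_dom_def)
    then show ?thesis using x(2) by auto
  qed
  moreover have "\<theta> z = Var z" using idem w(2) by (auto simp: idem_subst_def)
  ultimately show "subst_comp (Var(x := t)) \<theta> z = Var z" by (simp add: subst_comp_def)
qed

lemma is_irmgu_eqs_elim:
  assumes x: "x \<notin> vars_term t" and \<theta>': "is_irmgu_eqs \<theta>' (subst_eqs E (Var(x := t)))"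
  shows "is_irmgu_eqs (subst_comp (Var(x := t)) \<theta>') ((Var x, t) # E)"
proof -
  define \<sigma> where "\<sigma> = Var(x := t)"
  define \<theta> where "\<theta> = subst_comp \<sigma> \<theta>'"
  have vars\<theta>': "subst_vars \<theta>' \<subseteq> vars_eqs (subst_eqs E \<sigma>)"
    using \<theta>' by (auto simp: is_irmgu_eqs_def \<sigma>_def)
  have vars_E\<sigma>: "vars_eqs (subst_eqs E \<sigma>) \<subseteq> vars_eqs E \<union> vars_term t - {x}"
    using x by (auto simp: vars_subst_eqs \<sigma>_def split: if_splits)
  have "subst_term t \<sigma> = t"
    using x by (subst subst_term_Var[symmetric], intro subst_term_cong) (auto simp: \<sigma>_def)
  then have "subst_term t \<theta> = \<theta> x"
    by (simp add: \<theta>_def subst_term_comp[symmetric]) (simp add: \<sigma>_def subst_comp_def)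
  then have "unifies \<theta> ((Var x, t) # E)"
    using \<theta>' by (auto simp: \<theta>_def \<sigma>_def is_irmgu_eqs_def unifies_subst_eqs)
  moreover have "\<exists>\<delta>. u = subst_comp \<theta> \<delta>" if u: "unifies u ((Var x, t) # E)" for u
  proof -
    have u\<sigma>: "subst_comp \<sigma> u = u" using subst_comp_elim[OF x] u by (simp add: \<sigma>_def)
    then have "unifies u (subst_eqs E \<sigma>)" using u by (simp add: unifies_subst_eqs)
    then obtain \<delta> where "u = subst_comp \<theta>' \<delta>"
      using \<theta>' by (auto simp: is_irmgu_eqs_def \<sigma>_def)
    then show ?thesis using u\<sigma> by (metis \<theta>_def subst_comp_assoc)
  qed
  moreover have "idem_subst \<theta>"
    using idem_subst_comp_elim[OF x] \<theta>' vars\<theta>' vars_E\<sigma>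
    by (auto simp: \<theta>_def \<sigma>_def is_irmgu_eqs_def)
  moreover have "subst_vars \<sigma> \<subseteq> {x} \<union> vars_term t"
    by (auto simp: subst_vars_def subst_dom_def \<sigma>_def split: if_splits)
  then have "subst_vars \<theta> \<subseteq> vars_eqs ((Var x, t) # E)"
    using subst_vars_comp[of \<sigma> \<theta>'] vars\<theta>' vars_E\<sigma> by (auto simp: \<theta>_def)
  ultimately show ?thesis by (simp add: is_irmgu_eqs_def \<theta>_def \<sigma>_def)
qed

definition unif_order :: "(('f, 'v) eqs \<times> ('f, 'v) eqs) set" where
  "unif_order = measures [\<lambda>E. card (vars_eqs E), size_eqs]"

lemma wf_unif_order: "wf unif_order"
  by (simp add: unif_order_def)

lemma unif_order_smaller_vars:
  "vars_eqs E' \<subset> vars_eqs E \<Longrightarrow> (E', E) \<in> unif_order"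
  by (simp add: unif_order_def finite_vars_eqs psubset_card_mono)

lemma unif_order_smaller_size:
  "vars_eqs E' \<subseteq> vars_eqs E \<Longrightarrow> size_eqs E' < size_eqs E \<Longrightarrow> (E', E) \<in> unif_order"
  using card_mono[OF finite_vars_eqs[of E], of "vars_eqs E'"] by (auto simp: unif_order_def)

lemma irmgu_eqs_var_case:
  assumes u: "unifies u ((Var x, t) # E)"
    and IH: "\<And>E'. (E', (Var x, t) # E) \<in> unif_order \<Longrightarrow> unifies u E' \<Longrightarrow> \<exists>\<theta>. is_irmgu_eqs \<theta> E'"
  shows "\<exists>\<theta>. is_irmgu_eqs \<theta> ((Var x, t) # E)"
proof -
  consider "t = Var x" | "x \<in> vars_term t" "t \<noteq> Var x" | "x \<notin> vars_term t" by blast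
  then show ?thesis
  proof cases
    case 1
    have "(E, (Var x, t) # E) \<in> unif_order" by (rule unif_order_smaller_size) auto
    then show ?thesis using IH[of E] u 1 is_irmgu_eqs_trivial by auto
  next
    case 2
    then have "size (u x) < size (subst_term t u)" by (rule size_subst_term_occurs)
    moreover have "subst_term (Var x) u = subst_term t u" using u by (simp only: unifies_simps)
    ultimately show ?thesis by (metis less_irrefl subst_term.simps(1))
  next
    case 3
    define E' where "E' = subst_eqs E (Var(x := t))"
    have "vars_eqs E' \<subset> vars_eqs ((Var x, t) # E)"
      using 3 by (auto simp: E'_def vars_subst_eqs split: if_splits)
    then have "(E', (Var x, t) # E) \<in> unif_order" by (rule unif_order_smaller_vars)
    moreover have "subst_comp (Var(x := t)) u = u"
      using u by (intro subst_comp_elim[OF 3]) simp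
    then have "unifies u E'" using u by (simp add: E'_def unifies_subst_eqs)
    ultimately obtain \<theta>' where "is_irmgu_eqs \<theta>' E'" using IH by blast
    then show ?thesis unfolding E'_def using is_irmgu_eqs_elim[OF 3] by blast
  qed
qed

lemma unifiable_imp_irmgu_eqs: "unifies u E \<Longrightarrow> \<exists>\<theta>. is_irmgu_eqs \<theta> E"
proof (induction E rule: wf_induct_rule[OF wf_unif_order, case_names less])
  case (less E)
  show ?case
  proof (cases E)
    case Nil
    then show ?thesis using is_irmgu_eqs_Nil by blast
  next
    case (Cons eq E0)
    then obtain a b where E: "E = (a, b) # E0" by (cases eq) auto
    consider (var_left) x where "a = Var x" | (var_right) x where "b = Var x"
      | (funs) f ts g ss where "a = Fun f ts" "b = Fun g ss"
      by (metis fterm.exhaust)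
    then show ?thesis
    proof cases
      case (var_left x)
      have "unifies u ((Var x, b) # E0)" using less.prems by (simp add: E var_left)
      then show ?thesis
        unfolding E var_left by (rule irmgu_eqs_var_case) (use less.IH in \<open>simp add: E var_left\<close>)
    next
      case (var_right x)
      have same_order: "(E', (Var x, a) # E0) \<in> unif_order \<longleftrightarrow> (E', E) \<in> unif_order" for E'
        by (simp add: unif_order_def E var_right Un_ac add.commute)
      have "unifies u ((Var x, a) # E0)" using less.prems by (auto simp: E var_right)
      then have "\<exists>\<theta>. is_irmgu_eqs \<theta> ((Var x, a) # E0)"
        by (rule irmgu_eqs_var_case) (use less.IH same_order in blast)
      then show ?thesis unfolding E var_right using is_irmgu_eqs_swap by blast
    next
      case funs
      have eq: "f = g" "map (\<lambda>t. subst_term t u) ts = map (\<lambda>t. subst_term t u) ss"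
        using less.prems by (auto simp: E funs)
      then have len: "length ts = length ss" by (metis length_map)
      define E' where "E' = zip ts ss @ E0"
      have "(E', E) \<in> unif_order"
        using size_eqs_zip[OF len]
        by (intro unif_order_smaller_size) (auto simp: E'_def E funs len vars_eqs_zip)
      moreover have "unifies u E'" using less.prems len eq by (simp add: E'_def E funs unifies_zip)
      ultimately obtain \<theta> where "is_irmgu_eqs \<theta> E'" using less.IH by blast
      then have "is_irmgu_eqs \<theta> ((Fun f ts, Fun f ss) # E0)"
        unfolding E'_def by (rule is_irmgu_eqs_decompose[OF len])
      then show ?thesis by (auto simp: E funs eq)
    qed
  qed
qed

lemma unifiable_imp_irmgu:
  assumes "is_unifier u a b"
  obtains \<theta> where "is_irmgu \<theta> a b"
proof -
  obtain p ts q ss where a: "a = Atom p ts" and b: "b = Atom q ss" by (cases a, cases b)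
  have "p = q" and "map (\<lambda>t. subst_term t u) ts = map (\<lambda>t. subst_term t u) ss"
    using assms by (auto simp: is_unifier_def a b)
  then have len: "length ts = length ss"
    and unifier_iff: "is_unifier v a b \<longleftrightarrow> unifies v (zip ts ss)" for v
    by (auto simp: is_unifier_def a b unifies_zip dest: map_eq_imp_length_eq)
  obtain \<theta> where "is_irmgu_eqs \<theta> (zip ts ss)"
    using unifiable_imp_irmgu_eqs assms unifier_iff by blast
  then have "is_irmgu \<theta> a b"
    unfolding is_irmgu_def is_mgu_def unifier_iff using idem_subst_comp_self
    by (auto simp: is_irmgu_eqs_def vars_eqs_zip[OF len] a b)
  then show thesis by (rule that)
qed

lemma subst_atom_comp: "subst_atom (subst_atom a \<sigma>) \<tau> = subst_atom a (subst_comp \<sigma> \<tau>)"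
  by (cases a) (auto simp: subst_term_comp)

lemma subst_atom_cong: "(\<And>x. x \<in> vars_atom a \<Longrightarrow> \<sigma> x = \<tau> x) \<Longrightarrow> subst_atom a \<sigma> = subst_atom a \<tau>"
  by (cases a) (auto intro: subst_term_cong)

lemma subst_atom_Var [simp]: "subst_atom a Var = a"
  by (cases a) (auto simp: map_idI)

lemma finite_vars_atom [simp]: "finite (vars_atom a)"
  by (cases a) auto

lemma vars_subst_atom_subset: "vars_atom (subst_atom a \<theta>) \<subseteq> vars_atom a \<union> subst_vars \<theta>"
  by (cases a) (use vars_subst_term_subset in force)

lemma vars_atom_rename: "vars_atom (subst_atom a (\<lambda>x. Var (f x))) = f ` vars_atom a"
  by (cases a) (auto simp: vars_subst_term)

lemma subst_atom_rename: "subst_atom (subst_atom a (\<lambda>x. Var (f x))) \<mu> = subst_atom a (\<lambda>x. \<mu> (f x))"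
  by (simp add: subst_atom_comp subst_comp_def)

lemma dom_subst_goal [simp]: "dom (subst_goal G \<theta>) = dom G"
  by (auto simp: subst_goal_def)

lemma ran_subst_goal: "ran (subst_goal G \<theta>) = (\<lambda>a. subst_atom a \<theta>) ` ran G"
  by (auto simp: ran_def subst_goal_def)

lemma subst_goal_comp: "subst_goal (subst_goal G \<sigma>) \<tau> = subst_goal G (subst_comp \<sigma> \<tau>)"
  by (auto simp: subst_goal_def subst_atom_comp option.map_comp o_def)

lemma subst_goal_rename: "subst_goal (subst_goal G (\<lambda>x. Var (f x))) \<mu> = subst_goal G (\<lambda>x. \<mu> (f x))"
  by (simp add: subst_goal_comp subst_comp_def)

lemma subst_goal_Var [simp]: "subst_goal G Var = G"
  by (auto simp: subst_goal_def option.map_ident)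

lemma subst_goal_map_add: "subst_goal (F ++ G) \<theta> = subst_goal F \<theta> ++ subst_goal G \<theta>"
  by (auto simp: subst_goal_def map_add_def split: option.splits)

lemma subst_goal_delete: "subst_goal (G(q := None)) \<theta> = (subst_goal G \<theta>)(q := None)"
  by (auto simp: subst_goal_def)

lemma subst_goal_cong: "(\<And>x. x \<in> vars_goal G \<Longrightarrow> \<sigma> x = \<tau> x) \<Longrightarrow> subst_goal G \<sigma> = subst_goal G \<tau>"
  unfolding subst_goal_def vars_goal_def
  by (rule ext, rename_tac q, case_tac "G q") (auto intro!: subst_atom_cong simp: ran_def)

lemma map_add_delete_left: "q \<notin> dom X \<Longrightarrow> (F ++ X)(q := None) = F(q := None) ++ X"
  by (rule ext) (auto simp: map_add_def split: option.splits)

lemma map_add_delete_right: "q \<notin> dom F \<Longrightarrow> (F ++ X)(q := None) = F ++ X(q := None)"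
  by (rule ext) (auto simp: map_add_def split: option.splits)

lemma finite_vars_goal: "is_pgoal G \<Longrightarrow> finite (vars_goal G)"
  by (auto simp: is_pgoal_def vars_goal_def finite_ran)

lemma vars_subst_goal_subset: "vars_goal (subst_goal G \<theta>) \<subseteq> vars_goal G \<union> subst_vars \<theta>"
  using vars_subst_atom_subset by (fastforce simp: vars_goal_def ran_subst_goal)

lemma vars_goal_rename: "vars_goal (subst_goal G (\<lambda>x. Var (f x))) = f ` vars_goal G"
  by (auto simp: vars_goal_def ran_subst_goal vars_atom_rename)

lemma vars_goal_map_add: "vars_goal (F ++ G) \<subseteq> vars_goal F \<union> vars_goal G"
  by (auto simp: vars_goal_def ran_def map_add_def split: option.splits)

lemma vars_goal_delete: "vars_goal (G(q := None)) \<subseteq> vars_goal G"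
  by (auto simp: vars_goal_def ran_def)

lemma vars_clause_rename: "vars_clause (subst_clause c (\<lambda>x. Var (f x))) = f ` vars_clause c"
  by (auto simp: vars_clause_def subst_clause_def vars_atom_rename vars_goal_rename)

lemma finite_vars_clause: "is_pgoal (snd c) \<Longrightarrow> finite (vars_clause c)"
  by (simp add: vars_clause_def finite_vars_goal)

lemma sel_prio_in_dom: "is_pgoal G \<Longrightarrow> dom G \<noteq> {} \<Longrightarrow> sel_prio G \<in> dom G"
  unfolding is_pgoal_def sel_prio_def by (rule Min_in)

lemma vars_sel_atom: "is_pgoal G \<Longrightarrow> dom G \<noteq> {} \<Longrightarrow> vars_atom (sel_atom G) \<subseteq> vars_goal G"
  using sel_prio_in_dom by (fastforce simp: sel_atom_def vars_goal_def ran_def)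

lemma sel_prio_subst_goal [simp]: "sel_prio (subst_goal G \<theta>) = sel_prio G"
  by (simp add: sel_prio_def)

lemma sel_prio_map_add_left:
  assumes "finite (dom F)" and "finite (dom G)" and "sel_prio (F ++ G) \<in> dom F"
  shows "sel_prio (F ++ G) = sel_prio F"
proof (rule antisym)
  show "sel_prio (F ++ G) \<le> sel_prio F"
    using assms unfolding sel_prio_def by (intro Min_antimono) auto
  show "sel_prio F \<le> sel_prio (F ++ G)"
    using assms unfolding sel_prio_def by (intro Min_le) auto
qed

lemma shifting_id: "is_shifting id"
  by (auto simp: is_shifting_def strict_mono_def)

lemma shifting_translate: "is_shifting (\<lambda>x. x + c)"
  by (auto simp: is_shifting_def strict_mono_def bij_plus_right)

lemma dom_shift_goal: "is_shifting \<pi> \<Longrightarrow> dom (shift_goal G \<pi>) = \<pi> ` dom G"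
  by (auto simp: is_shifting_def shift_goal_def bij_is_inj bij_is_surj surj_f_inv_f
      intro: image_eqI[of _ _ "inv \<pi> _"])

lemma shift_goal_id [simp]: "shift_goal G id = G"
  by (simp add: shift_goal_def inv_id)

lemma subst_shift_goal: "subst_goal (shift_goal G \<pi>) \<theta> = shift_goal (subst_goal G \<theta>) \<pi>"
  by (auto simp: subst_goal_def shift_goal_def)

lemma shift_goal_map_add: "shift_goal (F ++ G) \<pi> = shift_goal F \<pi> ++ shift_goal G \<pi>"
  by (auto simp: shift_goal_def map_add_def split: option.splits)

lemma shift_goal_delete: "bij \<pi> \<Longrightarrow> (shift_goal G \<pi>)(\<pi> q := None) = shift_goal (G(q := None)) \<pi>"
  unfolding shift_goal_def by (rule ext) (auto simp: bij_inv_eq_iff bij_is_inj)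

lemma vars_shift_goal: "bij \<pi> \<Longrightarrow> vars_goal (shift_goal G \<pi>) = vars_goal G"
  by (auto simp: vars_goal_def ran_def shift_goal_def) (metis bij_inv_eq_iff)

lemma dom_shift_subst_goal: "dom (shift_goal (subst_goal B \<xi>) \<pi>) = dom (shift_goal B \<pi>)"
  by (auto simp: shift_goal_def subst_goal_def)

lemma sel_prio_shift_goal:
  assumes "is_shifting \<sigma>" and "is_pgoal G" and "dom G \<noteq> {}"
  shows "sel_prio (shift_goal G \<sigma>) = \<sigma> (sel_prio G)"
  using assms mono_Min_commute[of \<sigma> "dom G"]
  by (simp add: sel_prio_def dom_shift_goal is_pgoal_def is_shifting_def strict_mono_mono)

lemma sel_atom_shift_map_add:
  assumes H: "H = shift_goal (subst_goal G lam) \<sigma> ++ X"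
    and disj: "plus_defined (shift_goal (subst_goal G lam) \<sigma>) X" and \<sigma>: "is_shifting \<sigma>"
    and q_dom: "sel_prio G \<in> dom G" and p: "sel_prio H = \<sigma> (sel_prio G)"
  shows "sel_atom H = subst_atom (sel_atom G) lam"
proof -
  define q where "q = sel_prio G"
  have "\<sigma> q \<in> dom (shift_goal (subst_goal G lam) \<sigma>)"
    using \<sigma> q_dom by (simp add: dom_shift_goal q_def)
  then have "X (\<sigma> q) = None" using disj by (auto simp: plus_defined_def)
  then have "H (\<sigma> q) = map_option (\<lambda>a. subst_atom a lam) (G q)"
    using \<sigma> by (simp add: H map_add_def shift_goal_def subst_goal_def is_shifting_def bij_is_inj)
  then show ?thesis using p q_dom by (auto simp: sel_atom_def q_def)
qed

lemma sel_prio_lowered_goal: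
  assumes H: "is_pgoal (A ++ X)" and A: "A = shift_goal (subst_goal G lam) \<sigma>"
    and \<sigma>: "is_shifting \<sigma>" and G: "is_pgoal G" and sel: "sel_prio (A ++ X) \<in> dom A"
  shows "dom G \<noteq> {}" and "sel_prio (A ++ X) = \<sigma> (sel_prio G)"
proof -
  show G_ne: "dom G \<noteq> {}" using sel \<sigma> by (auto simp: A dom_shift_goal)
  have "finite (dom A)" "finite (dom X)" using H by (auto simp: is_pgoal_def)
  then have "sel_prio (A ++ X) = sel_prio A"
    using sel_prio_map_add_left[of A X] sel by simp
  also have "sel_prio A = \<sigma> (sel_prio (subst_goal G lam))"
    unfolding A by (rule sel_prio_shift_goal[OF \<sigma>]) (use G G_ne in \<open>auto simp: is_pgoal_def\<close>)
  finally show "sel_prio (A ++ X) = \<sigma> (sel_prio G)" by simp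
qed

lemma sresult_unfold:
  "sresult s = subst_goal
     (goal_rest (sgoal s) ++ shift_goal (subst_goal (snd (sclause s)) (sren s)) (sshift s)) (smgu s)"
  by (simp add: sresult_def goal_plus_def rclause_def subst_clause_def)

lemma dom_sresult:
  assumes "is_step s"
  shows "dom (sresult s) = (dom (sgoal s) - {sel_prio (sgoal s)}) \<union> sshift s ` dom (snd (sclause s))"
  using assms
  by (auto simp: sresult_unfold is_step_def goal_rest_def dom_shift_subst_goal dom_shift_goal)

lemma body_prios_disjoint:
  assumes "is_step s"
  shows "(dom (sgoal s) - {sel_prio (sgoal s)}) \<inter> sshift s ` dom (snd (sclause s)) = {}"
proof -
  have "plus_defined (goal_rest (sgoal s)) (shift_goal (snd (rclause s)) (sshift s))"
    and "is_shifting (sshift s)"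
    using assms by (auto simp: is_step_def)
  then show ?thesis
    by (simp add: plus_defined_def goal_rest_def rclause_def subst_clause_def dom_shift_subst_goal
        dom_shift_goal)
qed

lemma is_pgoal_sresult: "is_step s \<Longrightarrow> is_pgoal (sresult s)"
  by (simp add: dom_sresult is_pgoal_def) (simp add: is_step_def is_pgoal_def)

lemma vars_sresult:
  assumes "is_step s"
  shows "vars_goal (sresult s) \<subseteq> vars_goal (sgoal s) \<union> vars_clause (rclause s)"
proof -
  have bij: "bij (sshift s)" and mgu: "is_irmgu (smgu s) (sel_atom (sgoal s)) (fst (rclause s))"
    and sel: "vars_atom (sel_atom (sgoal s)) \<subseteq> vars_goal (sgoal s)"
    using assms vars_sel_atom by (auto simp: is_step_def is_shifting_def)
  have "vars_goal (goal_rest (sgoal s) ++ shift_goal (snd (rclause s)) (sshift s))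
      \<subseteq> vars_goal (sgoal s) \<union> vars_clause (rclause s)"
    using vars_goal_map_add vars_goal_delete vars_shift_goal[OF bij]
    by (fastforce simp: goal_rest_def vars_clause_def)
  moreover have "subst_vars (smgu s) \<subseteq> vars_goal (sgoal s) \<union> vars_clause (rclause s)"
    using mgu sel by (auto simp: is_irmgu_def vars_clause_def)
  ultimately show ?thesis
    using vars_subst_goal_subset by (fastforce simp: sresult_def goal_plus_def)
qed

lemma finite_vars_rclause: "is_step s \<Longrightarrow> finite (vars_clause (rclause s))"
  by (rule finite_vars_clause) (simp add: is_step_def rclause_def subst_clause_def is_pgoal_def)

lemma step_exists:
  assumes G: "is_pgoal G" "dom G \<noteq> {}" and B: "is_pgoal (snd c)" and \<xi>: "is_renaming \<xi>"
    and disj: "vars_goal G \<inter> vars_clause (subst_clause c \<xi>) = {}"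
    and u: "is_unifier u (sel_atom G) (fst (subst_clause c \<xi>))"
  obtains s where "is_step s" and "sgoal s = G" and "sclause s = c" and "sren s = \<xi>"
proof -
  obtain \<theta> where \<theta>: "is_irmgu \<theta> (sel_atom G) (fst (subst_clause c \<xi>))"
    using unifiable_imp_irmgu[OF u] .
  \<comment> \<open>translating by \<open>d\<close> moves every priority of the body above those of \<open>G\<close>\<close>
  define d where "d = Max (insert 0 (dom G)) - Min (insert 0 (dom (snd c))) + 1"
  have "g < b + d" if "g \<in> dom G" "b \<in> dom (snd c)" for g b
  proof -
    have "g \<le> Max (insert 0 (dom G))" using G that by (intro Max_ge) (auto simp: is_pgoal_def)
    moreover have "Min (insert 0 (dom (snd c))) \<le> b"
      using B that by (intro Min_le) (auto simp: is_pgoal_def)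
    ultimately show ?thesis by (simp add: d_def)
  qed
  then have "plus_defined (goal_rest G) (shift_goal (snd (subst_clause c \<xi>)) (\<lambda>x. x + d))"
    by (fastforce simp: plus_defined_def goal_rest_def subst_clause_def dom_shift_subst_goal
        dom_shift_goal[OF shifting_translate])
  then show thesis
    using G B \<xi> disj \<theta> shifting_translate
    by (intro that[of "\<lparr>sgoal = G, sclause = c, sren = \<xi>, smgu = \<theta>, sshift = \<lambda>x. x + d\<rparr>"])
      (auto simp: is_step_def rclause_def)
qed

lemma sresult_outside_selection:
  assumes st: "is_step s" and H: "sgoal s = A ++ X" and disj: "plus_defined A X"
    and sel: "sel_prio (sgoal s) \<notin> dom A"
  obtains X' where "sresult s = subst_goal A (smgu s) ++ X'"
    and "plus_defined (subst_goal A (smgu s)) X'"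
proof
  define p Bs where "p = sel_prio (sgoal s)" and "Bs = shift_goal (snd (rclause s)) (sshift s)"
  have rest: "goal_rest (sgoal s) = A ++ X(p := None)"
    using sel unfolding goal_rest_def p_def H by (simp add: map_add_delete_right)
  show "sresult s = subst_goal A (smgu s) ++ subst_goal (X(p := None) ++ Bs) (smgu s)"
    by (simp add: sresult_def goal_plus_def rest Bs_def subst_goal_map_add map_add_assoc)
  have "dom A \<inter> dom Bs = {}"
    using st rest by (auto simp: is_step_def plus_defined_def Bs_def)
  then show "plus_defined (subst_goal A (smgu s)) (subst_goal (X(p := None) ++ Bs) (smgu s))"
    using disj by (auto simp: plus_defined_def)
qed

lemma dom_split_sresult:
  assumes st: "is_step s" and H: "sgoal s = A ++ X" and disj: "plus_defined A X"
    and sel: "sel_prio (sgoal s) \<in> dom A"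
    and res: "sresult s = A' ++ X'" and disj': "plus_defined A' X'" and X': "dom X' = dom X"
  shows "dom A' = (dom A - {sel_prio (sgoal s)}) \<union> sshift s ` dom (snd (sclause s))"
proof -
  define p P where "p = sel_prio (sgoal s)" and "P = sshift s ` dom (snd (sclause s))"
  have "dom A \<inter> dom X = {}" using disj by (simp add: plus_defined_def)
  then have "p \<notin> dom X" using sel by (auto simp: p_def)
  have "dom A' = dom (sresult s) - dom X"
    using res disj' X' by (auto simp: plus_defined_def)
  also have "\<dots> = (dom A \<union> dom X - {p}) \<union> P - dom X"
    using dom_sresult[OF st] by (simp add: H p_def P_def Un_commute)
  also have "\<dots> = (dom A - {p}) \<union> P"
  proof -
    have "(dom A \<union> dom X - {p}) \<inter> P = {}"
      using body_prios_disjoint[OF st] by (simp add: H p_def P_def Un_commute)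
    then show ?thesis using \<open>dom A \<inter> dom X = {}\<close> \<open>p \<notin> dom X\<close> by blast
  qed
  finally show ?thesis by (simp add: p_def P_def)
qed

section \<open>Lowerings\<close>

lemma lowering_sel_atom:
  assumes "lowering_wit s1 s2 X lam \<sigma>"
  shows "sel_atom (sgoal s2) = subst_atom (sel_atom (sgoal s1)) lam"
proof (rule sel_atom_shift_map_add[where \<sigma> = \<sigma> and X = X])
  show "sel_prio (sgoal s1) \<in> dom (sgoal s1)"
    using assms sel_prio_in_dom by (auto simp: lowering_wit_def is_step_def)
qed (use assms in \<open>auto simp: lowering_wit_def goal_plus_def\<close>)

lemma lowering_goal_rest:
  assumes "lowering_wit s1 s2 X lam \<sigma>"
  shows "goal_rest (sgoal s2) = shift_goal (subst_goal (goal_rest (sgoal s1)) lam) \<sigma> ++ X"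
proof -
  define q where "q = sel_prio (sgoal s1)"
  have \<sigma>: "is_shifting \<sigma>" and disj: "plus_defined (shift_goal (subst_goal (sgoal s1) lam) \<sigma>) X"
    and G2: "sgoal s2 = shift_goal (subst_goal (sgoal s1) lam) \<sigma> ++ X"
    and p: "sel_prio (sgoal s2) = \<sigma> q"
    using assms by (auto simp: lowering_wit_def goal_plus_def q_def)
  have "q \<in> dom (sgoal s1)"
    using assms sel_prio_in_dom by (auto simp: lowering_wit_def is_step_def q_def)
  then have "\<sigma> q \<notin> dom X" using \<sigma> disj by (auto simp: plus_defined_def dom_shift_goal)
  then have "goal_rest (sgoal s2) = (shift_goal (subst_goal (sgoal s1) lam) \<sigma>)(\<sigma> q := None) ++ X"
    by (simp add: goal_rest_def p) (simp add: G2 map_add_delete_left)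
  also have "\<dots> = shift_goal (subst_goal (goal_rest (sgoal s1)) lam) \<sigma> ++ X"
    using \<sigma> by (simp add: shift_goal_delete is_shifting_def subst_goal_delete goal_rest_def q_def)
  finally show ?thesis .
qed

text \<open>The mgu of the lowered step factors through the mgu of the original one,
  because the renamed clause of the original step is variable-disjoint from its goal.\<close>
lemma lowering_result_instance:
  assumes low: "lowering_wit s1 s2 X lam \<sigma>"
  obtains \<delta> where "subst_goal (sresult s1) \<delta> = subst_goal
    (subst_goal (goal_rest (sgoal s1)) lam ++
      shift_goal (subst_goal (snd (sclause s2)) (sren s2)) (sshift s1)) (smgu s2)"
proof -
  define G1 c \<theta>1 \<theta>2 \<xi>2 where "G1 = sgoal s1" and "c = sclause s1" and "\<theta>1 = smgu s1"
    and "\<theta>2 = smgu s2" and "\<xi>2 = sren s2"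
  have st1: "is_step s1" and st2: "is_step s2" and c2: "sclause s2 = c"
    using low by (auto simp: lowering_wit_def c_def)
  then obtain f where f: "bij f" and \<xi>1: "sren s1 = (\<lambda>x. Var (f x))"
    by (auto simp: is_step_def is_renaming_def)
  have "vars_goal G1 \<inter> f ` vars_clause c = {}"
    using st1 by (simp add: is_step_def rclause_def \<xi>1 vars_clause_rename G1_def c_def)
  then obtain \<mu> where \<mu>_goal: "\<And>x. x \<in> vars_goal G1 \<Longrightarrow> \<mu> x = lam x"
    and \<mu>_clause: "\<And>x. x \<in> vars_clause c \<Longrightarrow> \<mu> (f x) = \<xi>2 x"
    using subst_rename_apart[OF bij_is_inj[OF f], where \<sigma> = lam and \<tau> = \<xi>2] by blast
  have sel: "subst_atom (sel_atom G1) \<mu> = sel_atom (sgoal s2)"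
    using \<mu>_goal vars_sel_atom st1 lowering_sel_atom[OF low]
    by (auto simp: is_step_def G1_def intro!: subst_atom_cong)
  have head: "subst_atom (fst (rclause s1)) \<mu> = fst (rclause s2)"
    using \<mu>_clause c2 by (auto simp: rclause_def subst_clause_def \<xi>1 subst_atom_rename vars_clause_def
        \<xi>2_def c_def intro!: subst_atom_cong)
  have "is_unifier (subst_comp \<mu> \<theta>2) (sel_atom G1) (fst (rclause s1))"
    using st2 unfolding is_unifier_def subst_atom_comp[symmetric] sel head
    by (simp add: is_step_def is_irmgu_def is_mgu_def is_unifier_def \<theta>2_def)
  then obtain \<delta> where \<delta>: "subst_comp \<mu> \<theta>2 = subst_comp \<theta>1 \<delta>"
    using st1 by (auto simp: is_step_def is_irmgu_def is_mgu_def G1_def \<theta>1_def)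
  have rest: "subst_goal (goal_rest G1) \<mu> = subst_goal (goal_rest G1) lam"
    by (rule subst_goal_cong, rule \<mu>_goal)
      (use vars_goal_delete[of G1 "sel_prio G1"] in \<open>auto simp: goal_rest_def\<close>)
  have body: "subst_goal (snd (rclause s1)) \<mu> = subst_goal (snd c) \<xi>2"
    using \<mu>_clause by (auto simp: rclause_def subst_clause_def \<xi>1 subst_goal_rename vars_clause_def
        c_def intro!: subst_goal_cong)
  have "subst_goal (sresult s1) \<delta>
      = subst_goal (goal_rest G1 ++ shift_goal (snd (rclause s1)) (sshift s1)) (subst_comp \<theta>1 \<delta>)"
    by (simp add: sresult_def goal_plus_def subst_goal_comp G1_def \<theta>1_def)
  also have "\<dots> = subst_goal (subst_goal (goal_rest G1) \<mu> ++
      shift_goal (subst_goal (snd (rclause s1)) \<mu>) (sshift s1)) \<theta>2"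
    by (simp add: \<delta>[symmetric] subst_goal_comp[symmetric] subst_goal_map_add subst_shift_goal)
  finally have "subst_goal (sresult s1) \<delta> = subst_goal
      (subst_goal (goal_rest G1) lam ++ shift_goal (subst_goal (snd c) \<xi>2) (sshift s1)) \<theta>2"
    by (simp only: rest body)
  then show thesis using c2 by (intro that) (simp add: G1_def \<xi>2_def \<theta>2_def)
qed

lemma cong_lowering_result:
  assumes "is_cong_lowering s1 s2 X"
  obtains \<delta> \<rho> where "is_shifting \<rho>"
    and "sresult s2 = goal_plus (shift_goal (subst_goal (sresult s1) \<delta>) \<rho>) (subst_goal X (smgu s2))"
    and "plus_defined (shift_goal (subst_goal (sresult s1) \<delta>) \<rho>) (subst_goal X (smgu s2))"
proof -
  obtain lam \<sigma> \<rho> where low: "lowering_wit s1 s2 X lam \<sigma>" and \<rho>: "is_shifting \<rho>"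
    and \<rho>_rest: "shift_goal (goal_rest (sgoal s1)) \<rho> = shift_goal (goal_rest (sgoal s1)) \<sigma>"
    and \<rho>_body: "shift_goal (shift_goal (snd (sclause s1)) (sshift s1)) \<rho>
      = shift_goal (snd (sclause s1)) (sshift s2)"
    using assms by (auto simp: is_cong_lowering_def)
  obtain \<delta> where \<delta>: "subst_goal (sresult s1) \<delta> = subst_goal (subst_goal (goal_rest (sgoal s1)) lam ++
      shift_goal (subst_goal (snd (sclause s2)) (sren s2)) (sshift s1)) (smgu s2)"
    using lowering_result_instance[OF low] by blast
  define R Bs where "R = shift_goal (subst_goal (goal_rest (sgoal s1)) lam) \<sigma>"
    and "Bs = shift_goal (subst_goal (snd (sclause s2)) (sren s2)) (sshift s2)"
  have st2: "is_step s2" and c: "sclause s2 = sclause s1" and \<sigma>: "is_shifting \<sigma>"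
    and disj: "plus_defined (shift_goal (subst_goal (sgoal s1) lam) \<sigma>) X"
    using low by (auto simp: lowering_wit_def)
  have shifted: "shift_goal (subst_goal (sresult s1) \<delta>) \<rho> = subst_goal (R ++ Bs) (smgu s2)"
    by (simp add: \<delta> subst_shift_goal[symmetric] shift_goal_map_add \<rho>_rest \<rho>_body c R_def Bs_def)
  have rest2: "goal_rest (sgoal s2) = R ++ X"
    using lowering_goal_rest[OF low] by (simp add: R_def)
  then have "dom Bs \<inter> dom X = {}"
    using st2 by (auto simp: is_step_def plus_defined_def rclause_def subst_clause_def Bs_def)
  then have comm: "R ++ X ++ Bs = R ++ Bs ++ X"
    by (metis map_add_assoc map_add_comm)
  have "sresult s2 = subst_goal (R ++ X ++ Bs) (smgu s2)"
    by (simp add: sresult_unfold rest2 Bs_def)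
  also have "\<dots> = subst_goal (R ++ Bs) (smgu s2) ++ subst_goal X (smgu s2)"
    by (simp only: comm subst_goal_map_add)
  finally have
    "sresult s2 = goal_plus (shift_goal (subst_goal (sresult s1) \<delta>) \<rho>) (subst_goal X (smgu s2))"
    by (simp only: shifted goal_plus_def)
  moreover have "dom R \<subseteq> dom (shift_goal (subst_goal (sgoal s1) lam) \<sigma>)"
    using \<sigma> by (auto simp: R_def dom_shift_goal goal_rest_def)
  then have "plus_defined (shift_goal (subst_goal (sresult s1) \<delta>) \<rho>) (subst_goal X (smgu s2))"
    using disj \<open>dom Bs \<inter> dom X = {}\<close> by (auto simp: shifted plus_defined_def)
  ultimately show thesis using \<rho> by (rule that[rotated])
qed

lemma cong_lowering_renamed_step:
  assumes "is_step s" and "is_step s'"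
    and "sgoal s' = sgoal s" and "sclause s' = sclause s" and "sshift s' = sshift s"
  shows "is_cong_lowering s s' Map.empty"
  unfolding is_cong_lowering_def lowering_wit_def
  using assms shifting_id
  by (auto simp: plus_defined_def goal_plus_def intro!: exI[of _ Var] exI[of _ id])

section \<open>Lifting derivations\<close>

lemma complete_steps_rename:
  assumes S: "complete_steps S" and s0: "is_step s0"
  obtains s where "s \<in> S" and "sgoal s = sgoal s0" and "sclause s = sclause s0" and "sren s = sren s0"
proof -
  obtain s1 where s1: "s1 \<in> S" "sgoal s1 = sgoal s0" "sclause s1 = sclause s0"
    using S s0 unfolding complete_steps_def by blast
  then have st1: "is_step s1" using S by (auto simp: complete_steps_def)
  define s where "s = s1\<lparr>sren := sren s0, smgu := smgu s0\<rparr>"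
  have st: "is_step s"
    using st1 s0 s1
    by (auto simp: is_step_def s_def rclause_def subst_clause_def plus_defined_def
        dom_shift_subst_goal)
  then have "mutual_cong_lowering s1 s"
    using cong_lowering_renamed_step[OF st1 st] cong_lowering_renamed_step[OF st st1]
    by (auto simp: mutual_cong_lowering_def s_def)
  then have "s \<in> S" using S s1(1) st unfolding complete_steps_def by blast
  then show thesis using s1 by (intro that[of s]) (auto simp: s_def)
qed

lemma lift_instance_step:
  fixes G :: "('p, 'f, 'v) pgoal" and W :: "'v set"
  assumes inf: "infinite (UNIV :: 'v set)" and complete: "complete_steps S"
    and st: "is_step s" and G: "is_pgoal G" "dom G \<noteq> {}" and W: "finite W" "vars_goal G \<subseteq> W"
    and sel_atom: "sel_atom (sgoal s) = subst_atom (sel_atom G) lam"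
  obtains s1 where "s1 \<in> S" and "sgoal s1 = G" and "sclause s1 = sclause s"
    and "vars_clause (rclause s1) \<inter> W = {}"
proof -
  define c where "c = sclause s"
  have "finite (vars_clause c)" using st by (simp add: is_step_def finite_vars_clause c_def)
  then obtain f where f: "bij f" and fresh: "f ` vars_clause c \<inter> W = {}"
    using fresh_renaming[OF inf _ W(1)] by blast
  define \<xi> where "\<xi> = (\<lambda>x. Var (f x) :: ('f, 'v) fterm)"
  have vars_\<xi>: "vars_clause (subst_clause c \<xi>) \<inter> W = {}"
    using fresh by (simp add: \<xi>_def vars_clause_rename)
  have "vars_goal G \<inter> f ` vars_clause c = {}" using W(2) fresh by blast
  then obtain \<mu> where \<mu>_goal: "\<And>x. x \<in> vars_goal G \<Longrightarrow> \<mu> x = lam x"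
    and \<mu>_clause: "\<And>x. x \<in> vars_clause c \<Longrightarrow> \<mu> (f x) = sren s x"
    using subst_rename_apart[OF bij_is_inj[OF f], where \<sigma> = lam and \<tau> = "sren s"] by blast
  have "subst_atom (sel_atom G) \<mu> = sel_atom (sgoal s)"
    using \<mu>_goal vars_sel_atom[OF G] sel_atom by (auto intro!: subst_atom_cong)
  moreover have "subst_atom (fst (subst_clause c \<xi>)) \<mu> = fst (rclause s)"
    using \<mu>_clause by (auto simp: subst_clause_def \<xi>_def subst_atom_rename rclause_def c_def
        vars_clause_def intro!: subst_atom_cong)
  moreover have "is_unifier (smgu s) (sel_atom (sgoal s)) (fst (rclause s))"
    using st by (simp add: is_step_def is_irmgu_def is_mgu_def)
  ultimately have u: "is_unifier (subst_comp \<mu> (smgu s)) (sel_atom G) (fst (subst_clause c \<xi>))"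
    by (simp add: is_unifier_def subst_atom_comp[symmetric])
  have \<xi>: "is_renaming \<xi>" using f by (auto simp: is_renaming_def \<xi>_def)
  have B: "is_pgoal (snd c)" using st by (simp add: is_step_def c_def)
  have "vars_goal G \<inter> vars_clause (subst_clause c \<xi>) = {}" using vars_\<xi> W(2) by blast
  then obtain s0 where s0: "is_step s0" "sgoal s0 = G" "sclause s0 = c" "sren s0 = \<xi>"
    by (rule step_exists[OF G B \<xi> _ u])
  obtain s1 where s1: "s1 \<in> S" "sgoal s1 = G" "sclause s1 = c" "sren s1 = \<xi>"
    by (rule complete_steps_rename[OF complete s0(1)]) (simp add: s0)
  moreover have "vars_clause (rclause s1) \<inter> W = {}" using vars_\<xi> s1 by (simp add: rclause_def)
  ultimately show thesis by (intro that) (simp_all add: c_def)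
qed

lemma lift_step:
  fixes G :: "('p, 'f, 'v) pgoal" and W :: "'v set"
  assumes inf: "infinite (UNIV :: 'v set)" and S: "si_scheduling_rule S"
    and s: "s \<in> S" "sgoal s = A ++ X" and A: "A = shift_goal (subst_goal G lam) \<sigma>"
    and disj: "plus_defined A X" and \<sigma>: "is_shifting \<sigma>" and G: "is_pgoal G"
    and W: "finite W" "vars_goal G \<subseteq> W"
    and sel: "sel_prio (sgoal s) \<in> dom A"
  obtains s1 \<delta> \<rho> where "s1 \<in> S" and "sgoal s1 = G" and "sclause s1 = sclause s"
    and "vars_clause (rclause s1) \<inter> W = {}" and "is_shifting \<rho>"
    and "sresult s = goal_plus (shift_goal (subst_goal (sresult s1) \<delta>) \<rho>) (subst_goal X (smgu s))"
    and "plus_defined (shift_goal (subst_goal (sresult s1) \<delta>) \<rho>) (subst_goal X (smgu s))"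
proof -
  have complete: "complete_steps S" and si: "spec_independent S"
    using S by (auto simp: si_scheduling_rule_def)
  then have st: "is_step s" using s by (auto simp: complete_steps_def)
  then have "is_pgoal (A ++ X)" using s(2) by (simp add: is_step_def)
  then have G_ne: "dom G \<noteq> {}" and p: "sel_prio (sgoal s) = \<sigma> (sel_prio G)"
    using sel_prio_lowered_goal[OF _ A \<sigma> G] sel s(2) by auto
  have "sel_atom (sgoal s) = subst_atom (sel_atom G) lam"
    using s(2) disj \<sigma> sel_prio_in_dom[OF G G_ne] p
    by (intro sel_atom_shift_map_add) (simp_all add: A goal_plus_def)
  then obtain s1 where s1: "s1 \<in> S" "sgoal s1 = G" "sclause s1 = sclause s"
    and fresh: "vars_clause (rclause s1) \<inter> W = {}"
    by (rule lift_instance_step[OF inf complete st G G_ne W])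
  have "is_step s1" using complete s1(1) by (simp add: complete_steps_def)
  then have "lowering_wit s1 s X lam \<sigma>"
    using s1 st s disj \<sigma> p unfolding lowering_wit_def by (simp add: A goal_plus_def)
  then have "is_cong_lowering s1 s X"
    using si s1(1) s(1) unfolding spec_independent_def is_lowering_def by blast
  then obtain \<delta> \<rho> where "is_shifting \<rho>"
    and "sresult s = goal_plus (shift_goal (subst_goal (sresult s1) \<delta>) \<rho>) (subst_goal X (smgu s))"
    and "plus_defined (shift_goal (subst_goal (sresult s1) \<delta>) \<rho>) (subst_goal X (smgu s))"
    by (rule cong_lowering_result)
  with s1 fresh show thesis by (rule that)
qed

fun is_step_chain :: "('p, 'f, 'v) pgoal \<Rightarrow> ('p, 'f, 'v) pstep list \<Rightarrow> bool" where
  "is_step_chain G [] = True"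
| "is_step_chain G (s # ds) = (is_step s \<and> sgoal s = G \<and> is_step_chain (sresult s) ds)"

fun clauses_fresh :: "'v set \<Rightarrow> ('p, 'f, 'v) pstep list \<Rightarrow> bool" where
  "clauses_fresh W [] = True"
| "clauses_fresh W (s # ds) =
     (vars_clause (rclause s) \<inter> W = {} \<and> clauses_fresh (W \<union> vars_clause (rclause s)) ds)"

lemma is_step_chain_iff:
  "is_step_chain G ds \<longleftrightarrow> (\<forall>i<length ds. is_step (ds ! i)) \<and> (ds \<noteq> [] \<longrightarrow> sgoal (ds ! 0) = G) \<and>
     (\<forall>i. Suc i < length ds \<longrightarrow> sgoal (ds ! Suc i) = sresult (ds ! i))"
  by (induction ds arbitrary: G) (auto simp: All_less_Suc2 nth_Cons split: nat.split)

lemma clauses_fresh_iff: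
  "clauses_fresh W ds \<longleftrightarrow> (\<forall>j<length ds. vars_clause (rclause (ds ! j)) \<inter> W = {} \<and>
     (\<forall>i<j. vars_clause (rclause (ds ! j)) \<inter> vars_clause (rclause (ds ! i)) = {}))"
  by (induction ds arbitrary: W) (auto simp: All_less_Suc2 nth_Cons Int_Un_distrib split: nat.split)

lemma nvar_clauses_fresh: "clauses_fresh W ds \<Longrightarrow> nvar ds \<inter> W = {}"
  by (induction ds arbitrary: W) (auto simp: nvar_def)

lemma lift_derivation:
  fixes G :: "('p, 'f, 'v) pgoal" and W :: "'v set"
  assumes inf: "infinite (UNIV :: 'v set)" and S: "si_scheduling_rule S"
  shows "set ds \<subseteq> S \<Longrightarrow> is_step_chain (A ++ X) ds \<Longrightarrow> A = shift_goal (subst_goal G lam) \<sigma> \<Longrightarrow>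
    plus_defined A X \<Longrightarrow> is_shifting \<sigma> \<Longrightarrow> is_pgoal G \<Longrightarrow> finite W \<Longrightarrow> vars_goal G \<subseteq> W \<Longrightarrow>
    \<exists>dr. is_step_chain G dr \<and> set dr \<subseteq> S \<and> map sclause dr = subtempl ds (dom A) \<and> clauses_fresh W dr"
proof (induction ds arbitrary: A X G lam \<sigma> W)
  case Nil
  show ?case by (intro exI[of _ "[]"]) simp
next
  case (Cons s ds)
  have s: "s \<in> S" "is_step s" "sgoal s = A ++ X" and ds: "set ds \<subseteq> S"
    and chain: "is_step_chain (sresult s) ds"
    using Cons.prems by auto
  define p where "p = sel_prio (sgoal s)"
  show ?case
  proof (cases "p \<in> dom A")
    case False
    obtain X' where res: "sresult s = subst_goal A (smgu s) ++ X'"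
      and disj: "plus_defined (subst_goal A (smgu s)) X'"
      using sresult_outside_selection[OF s(2,3) Cons.prems(4)] False by (auto simp: p_def)
    have A': "subst_goal A (smgu s) = shift_goal (subst_goal G (subst_comp lam (smgu s))) \<sigma>"
      by (simp add: Cons.prems(3) subst_shift_goal subst_goal_comp)
    obtain dr where "is_step_chain G dr \<and> set dr \<subseteq> S \<and> map sclause dr = subtempl ds (dom A) \<and>
        clauses_fresh W dr"
      using Cons.IH[OF ds chain[unfolded res] A' disj Cons.prems(5-8)] by auto
    moreover have "subtempl (s # ds) (dom A) = subtempl ds (dom A)"
      using False by (simp add: p_def)
    ultimately show ?thesis by auto
  next
    case True
    obtain s1 \<delta> \<rho> where s1: "s1 \<in> S" "sgoal s1 = G" "sclause s1 = sclause s"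
      and fresh: "vars_clause (rclause s1) \<inter> W = {}" and \<rho>: "is_shifting \<rho>"
      and res:
        "sresult s = goal_plus (shift_goal (subst_goal (sresult s1) \<delta>) \<rho>) (subst_goal X (smgu s))"
      and disj: "plus_defined (shift_goal (subst_goal (sresult s1) \<delta>) \<rho>) (subst_goal X (smgu s))"
      by (rule lift_step[OF inf S s(1,3) Cons.prems(3-8) True[unfolded p_def]])
    define A' where "A' = shift_goal (subst_goal (sresult s1) \<delta>) \<rho>"
    have st1: "is_step s1" using S s1(1) by (auto simp: si_scheduling_rule_def complete_steps_def)
    have dom_A': "dom A' = (dom A - {p}) \<union> sshift s ` dom (snd (sclause s))"
      using dom_split_sresult[OF s(2,3) Cons.prems(4) True[unfolded p_def]] res disj
      by (simp add: A'_def goal_plus_def p_def)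
    have "vars_goal (sresult s1) \<subseteq> W \<union> vars_clause (rclause s1)"
      using vars_sresult[OF st1] s1(2) Cons.prems(8) by auto
    moreover have "finite (W \<union> vars_clause (rclause s1))"
      using Cons.prems(7) finite_vars_rclause[OF st1] by blast
    ultimately obtain dr where dr: "is_step_chain (sresult s1) dr" "set dr \<subseteq> S"
      "map sclause dr = subtempl ds (dom A')" "clauses_fresh (W \<union> vars_clause (rclause s1)) dr"
      using Cons.IH[OF ds chain[unfolded res goal_plus_def, folded A'_def] A'_def
          disj[folded A'_def] \<rho> is_pgoal_sresult[OF st1]] by blast
    moreover have "subtempl (s # ds) (dom A) = sclause s # subtempl ds (dom A')"
      using True by (simp add: dom_A' p_def)
    ultimately show ?thesis
      using s1 st1 fresh by (intro exI[of _ "s1 # dr"]) simp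
  qed
qed

theorem lemmaL3p2p1:
  fixes S :: "('p, 'f, 'v) pstep set" and V :: "'v set"
    and G X :: "('p, 'f, 'v) pgoal" and \<gamma> :: "('f, 'v) subst" and \<tau> :: "rat \<Rightarrow> rat"
    and D :: "('p, 'f, 'v) clause list" and ds :: "('p, 'f, 'v) pstep list"
  assumes "infinite (UNIV :: 'v set)"
    and "si_scheduling_rule S"
    and "finite V"
    and "is_pgoal G" and "is_pgoal X"
    and "is_shifting \<tau>"
    and "plus_defined X (shift_goal (subst_goal G \<gamma>) \<tau>)"
    and "deriv_via S (goal_plus X (shift_goal (subst_goal G \<gamma>) \<tau>)) D ds"
  shows "\<exists>dr. deriv_via S G (subtempl ds (dom (shift_goal (subst_goal G \<gamma>) \<tau>))) dr
              \<and> nvar dr \<inter> V = {}"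
proof -
  define A where "A = shift_goal (subst_goal G \<gamma>) \<tau>"
  have disj: "plus_defined A X" using assms(7) by (auto simp: plus_defined_def A_def)
  then have "goal_plus X A = A ++ X"
    by (auto simp: goal_plus_def plus_defined_def intro: map_add_comm)
  then have "set ds \<subseteq> S" and "is_step_chain (A ++ X) ds"
    using assms(8) by (auto simp: deriv_via_def is_deriv_def is_step_chain_iff A_def)
  moreover have "finite (vars_goal G \<union> V)" using assms(3,4) finite_vars_goal by blast
  ultimately obtain dr where dr: "is_step_chain G dr" "set dr \<subseteq> S"
      "map sclause dr = subtempl ds (dom A)" "clauses_fresh (vars_goal G \<union> V) dr"
    using lift_derivation[OF assms(1,2) _ _ A_def disj assms(6,4)] by blast
  then have "is_deriv G dr"
    using assms(4) by (auto simp: is_deriv_def is_step_chain_iff clauses_fresh_iff)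
  moreover have "nvar dr \<inter> V = {}" using nvar_clauses_fresh[OF dr(4)] by blast
  ultimately show ?thesis using dr by (auto simp: deriv_via_def template_def A_def)
qed

end
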